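(* For a random set of $n$ source symbols and a corresponding regular IBLT with $m$ coded symbols, the probability that the peeling decoder can recover at least one source symbol decreases exponentially in $n/m$.
   Context: A regular IBLT with parameters $m,k$ consists of $m$ coded symbols; each source symbol is mapped to $k$ of the $m$ coded symbols chosen uniformly at random (independently for different source symbols). The peeling decoder repeatedly finds a pure coded symbol (one with exactly one not-yet-recovered source symbol mapped to it), recovers that source symbol, and removes it from all coded symbols it is mapped to, stopping when no pure coded symbol remains; in particular it recovers nothing if initially no coded symbol is pure. *)

theory Defs
  imports "HOL-Probability.Probability"
begin

text \<open>Source symbols are indexed by 0..<n, coded symbols by 0..<m.
  A mapping h assigns to each source symbol i the set h i of the k coded
  symbols it is mapped to.\<close>

definition cell_choice_pmf :: "nat \<Rightarrow> nat \<Rightarrow> nat set pmf" where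
  "cell_choice_pmf m k = pmf_of_set {S. S \<subseteq> {..<m} \<and> card S = k}"

definition iblt_pmf :: "nat \<Rightarrow> nat \<Rightarrow> nat \<Rightarrow> (nat \<Rightarrow> nat set) pmf" where
  "iblt_pmf n m k = Pi_pmf {..<n} {} (\<lambda>_. cell_choice_pmf m k)"

text \<open>Set of source symbols recovered by the peeling decoder: source i is
  recovered iff it lies in some coded symbol j all of whose other source
  symbols have already been recovered (then j becomes pure with i as its
  only not-yet-recovered source symbol). This least fixed point is exactly
  the output of the peeling decoder (which is independent of the order of
  peeling).\<close>
inductive_set peel_recovered :: "nat \<Rightarrow> (nat \<Rightarrow> nat set) \<Rightarrow> nat set"
  for n :: nat and h :: "nat \<Rightarrow> nat set" where
  peel: "i < n \<Longrightarrow> j \<in> h i \<Longrightarrow>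
         (\<forall>i'<n. i' \<noteq> i \<and> j \<in> h i' \<longrightarrow> i' \<in> peel_recovered n h) \<Longrightarrow>
         i \<in> peel_recovered n h"

definition prob_recover_some :: "nat \<Rightarrow> nat \<Rightarrow> nat \<Rightarrow> real" where
  "prob_recover_some n m k =
     measure_pmf.prob (iblt_pmf n m k) {h. peel_recovered n h \<noteq> {}}"

end

theory Submission
  imports Defs
begin

text \<open>Peeling can only start at a coded symbol that is pure from the outset, i.e. one to which
  exactly one source symbol is mapped. For fixed source i and coded symbol j this requires
  the other n - 1 source symbols to avoid j, which happens with probability
  (1 - k/m)^(n-1) \<le> exp (-(n-1)/m). A union bound over the m n pairs (i, j) gives
  m n exp (-(n-1)/m), and the linear factor n is absorbed by halving the exponent.\<close>

lemma peel_recovered_nonempty_imp_pure: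
  assumes "x \<in> peel_recovered n h"
  shows "\<exists>i<n. \<exists>j \<in> h i. \<forall>i'<n. i' \<noteq> i \<longrightarrow> j \<notin> h i'"
  using assms
proof (induction rule: peel_recovered.induct)
  case (peel i j)
  show ?case
  proof (cases "\<exists>i'<n. i' \<noteq> i \<and> j \<in> h i'")
    case True
    then show ?thesis using peel.IH by blast
  next
    case False
    then show ?thesis using peel.hyps by blast
  qed
qed

lemma k_subsets_finite_nonempty:
  assumes "k \<le> m"
  shows "finite {S. S \<subseteq> {..<m} \<and> card S = k}" "{S. S \<subseteq> {..<m} \<and> card S = k} \<noteq> {}"
proof -
  show "finite {S. S \<subseteq> {..<m} \<and> card S = k}"
    by (rule finite_subset[of _ "Pow {..<m}"]) auto
  have "{..<k} \<in> {S. S \<subseteq> {..<m} \<and> card S = k}" using assms by auto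
  then show "{S. S \<subseteq> {..<m} \<and> card S = k} \<noteq> {}" by blast
qed

lemma set_pmf_cell_choice_pmf:
  assumes "k \<le> m"
  shows "set_pmf (cell_choice_pmf m k) = {S. S \<subseteq> {..<m} \<and> card S = k}"
  unfolding cell_choice_pmf_def using k_subsets_finite_nonempty[OF assms] by simp

lemma iblt_pmf_cells_subset:
  assumes "k \<le> m" "h \<in> set_pmf (iblt_pmf n m k)" "i < n"
  shows "h i \<subseteq> {..<m}"
  using assms by (auto simp: iblt_pmf_def set_Pi_pmf set_pmf_cell_choice_pmf PiE_dflt_def)

lemma prob_cell_choice_avoid:
  assumes "k \<le> m" "j < m"
  shows "measure_pmf.prob (cell_choice_pmf m k) {S. j \<notin> S} = (real m - real k) / real m"
proof -
  define K where "K = {S. S \<subseteq> {..<m} \<and> card S = k}"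
  have card_K: "card K = m choose k"
    unfolding K_def using n_subsets[of "{..<m}" k] by simp
  have "K \<inter> {S. j \<notin> S} = {S. S \<subseteq> {..<m} - {j} \<and> card S = k}"
    unfolding K_def by auto
  then have card_avoid: "card (K \<inter> {S. j \<notin> S}) = (m - 1) choose k"
    using n_subsets[of "{..<m} - {j}" k] assms by simp
  have "real ((m - k) * (m choose k)) = real (m * ((m - 1) choose k))"
    using binomial_absorb_comp[of m k] by simp
  then have "real ((m - 1) choose k) = (real m - real k) * real (m choose k) / real m"
    using assms by (simp add: of_nat_diff field_simps)
  moreover note k_subsets_finite_nonempty[OF assms(1), folded K_def]
  ultimately show ?thesis
    using assms unfolding cell_choice_pmf_def K_def[symmetric]
    by (simp add: measure_pmf_of_set card_K card_avoid)
qed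
lemma prob_iblt_others_avoid:
  assumes "k \<le> m" "j < m" "i < n"
  shows "measure_pmf.prob (iblt_pmf n m k) {h. \<forall>i'<n. i' \<noteq> i \<longrightarrow> j \<notin> h i'}
           = ((real m - real k) / real m) ^ (n - 1)"
proof -
  have "{h. \<forall>i'<n. i' \<noteq> i \<longrightarrow> j \<notin> h i'}
          = Pi {..<n} (\<lambda>i'. if i' = i then UNIV else {S. j \<notin> S})"
    by (auto simp: Pi_def)
  then have "measure_pmf.prob (iblt_pmf n m k) {h. \<forall>i'<n. i' \<noteq> i \<longrightarrow> j \<notin> h i'}
      = (\<Prod>i'\<in>{..<n}. if i' = i then 1 else (real m - real k) / real m)"
    unfolding iblt_pmf_def using prob_cell_choice_avoid[OF assms(1,2)]
    by (simp add: measure_Pi_pmf_Pi if_distrib cong: if_cong)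
  also have "\<dots> = ((real m - real k) / real m) ^ (n - 1)"
  proof -
    have "{..<n} \<inter> - {i} = {..<n} - {i}" by blast
    then show ?thesis using assms(3) by (simp add: prod.If_cases card_Diff_singleton)
  qed
  finally show ?thesis .
qed

lemma prob_recover_some_le:
  assumes "k \<le> m"
  shows "prob_recover_some n m k \<le> real m * real n * ((real m - real k) / real m) ^ (n - 1)"
proof -
  define M where "M = iblt_pmf n m k"
  define pure where "pure j i = {h. \<forall>i'<n. i' \<noteq> i \<longrightarrow> j \<notin> h i'}" for j i :: nat
  have "{h. peel_recovered n h \<noteq> {}} \<inter> set_pmf M \<subseteq> (\<Union>j<m. \<Union>i<n. pure j i)"
  proof
    fix h assume h: "h \<in> {h. peel_recovered n h \<noteq> {}} \<inter> set_pmf M"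
    then obtain i j where "i < n" "j \<in> h i" "\<forall>i'<n. i' \<noteq> i \<longrightarrow> j \<notin> h i'"
      using peel_recovered_nonempty_imp_pure by blast
    moreover have "h i \<subseteq> {..<m}"
      using iblt_pmf_cells_subset[OF assms] h \<open>i < n\<close> unfolding M_def by blast
    ultimately show "h \<in> (\<Union>j<m. \<Union>i<n. pure j i)" unfolding pure_def by blast
  qed
  then have "prob_recover_some n m k \<le> measure_pmf.prob M (\<Union>j<m. \<Union>i<n. pure j i)"
    unfolding prob_recover_some_def M_def
    by (subst measure_Int_set_pmf[symmetric]) (intro measure_pmf.finite_measure_mono, auto)
  also have "\<dots> \<le> (\<Sum>j<m. measure_pmf.prob M (\<Union>i<n. pure j i))"
    by (intro measure_pmf.finite_measure_subadditive_finite) auto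
  also have "\<dots> \<le> (\<Sum>j<m. \<Sum>i<n. measure_pmf.prob M (pure j i))"
    by (intro sum_mono measure_pmf.finite_measure_subadditive_finite) auto
  also have "\<dots> = real m * real n * ((real m - real k) / real m) ^ (n - 1)"
    unfolding M_def pure_def by (simp add: prob_iblt_others_avoid[OF assms])
  finally show ?thesis .
qed

lemma linear_times_power_le_exp:
  fixes a q :: real
  assumes "a > 0" "0 \<le> q" "q \<le> exp (- a)"
  shows "real n * q ^ (n - 1) \<le> 2 / a * exp a * exp (- (a / 2) * real n)"
proof (cases "n = 0")
  case False
  have "q ^ (n - 1) \<le> exp (- a) ^ (n - 1)"
    using assms(3,2) by (rule power_mono)
  also have "\<dots> = exp a * exp (- a * real n)"
    using False by (simp add: of_nat_diff algebra_simps flip: exp_of_nat_mult exp_add)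
  finally have power_le: "q ^ (n - 1) \<le> exp a * exp (- a * real n)" .
  have "a / 2 * real n \<le> exp (a / 2 * real n)"
    using exp_ge_add_one_self[of "a / 2 * real n"] by linarith
  then have linear_le: "real n \<le> 2 / a * exp (a / 2 * real n)"
    using assms(1) by (simp add: field_simps)
  have "real n * q ^ (n - 1) \<le> 2 / a * exp (a / 2 * real n) * (exp a * exp (- a * real n))"
    using power_le linear_le assms(1,2) by (intro mult_mono) auto
  also have "\<dots> = 2 / a * exp a * exp (- (a / 2) * real n)"
    by (simp add: algebra_simps flip: exp_add)
  finally show ?thesis .
qed (use assms(1) in simp)

lemma avoid_ratio_le_exp:
  assumes "1 \<le> k" "k \<le> m"
  shows "(real m - real k) / real m \<le> exp (- (1 / real m))"
proof -
  have "(real m - real k) / real m \<le> 1 + (- 1 / real m)"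
    using assms by (simp add: field_simps)
  also have "\<dots> \<le> exp (- 1 / real m)" by (rule exp_ge_add_one_self)
  finally show ?thesis by simp
qed

theorem theoremA1:
  fixes k :: nat
  assumes "k \<ge> 1"
  shows "\<exists>c::real. c > 0 \<and>
           (\<forall>m::nat. m \<ge> k \<longrightarrow>
              (\<exists>C::real. \<forall>n::nat.
                 prob_recover_some n m k \<le> C * exp (- c * (real n / real m))))"
proof (rule exI[of _ "1/2"], intro conjI allI impI)
  fix m :: nat assume "m \<ge> k"
  define q where "q = (real m - real k) / real m"
  have "real m > 0" "0 \<le> q" "q \<le> exp (- (1 / real m))"
    using assms \<open>m \<ge> k\<close> avoid_ratio_le_exp unfolding q_def by auto
  show "\<exists>C. \<forall>n. prob_recover_some n m k \<le> C * exp (- (1/2) * (real n / real m))"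
  proof (intro exI[of _ "real m * (2 * real m * exp (1 / real m))"] allI)
    fix n :: nat
    have "prob_recover_some n m k \<le> real m * (real n * q ^ (n - 1))"
      using prob_recover_some_le[OF \<open>m \<ge> k\<close>] unfolding q_def by (simp add: mult.assoc)
    also have "\<dots> \<le> real m * (2 * real m * exp (1 / real m) * exp (- (1/2) * (real n / real m)))"
      using linear_times_power_le_exp[of "1 / real m" q n] \<open>real m > 0\<close> \<open>0 \<le> q\<close> \<open>q \<le> _\<close>
      by (intro mult_left_mono) (auto simp: ac_simps)
    finally show "prob_recover_some n m k
        \<le> real m * (2 * real m * exp (1 / real m)) * exp (- (1/2) * (real n / real m))"
      by (simp add: mult.assoc)
  qed
qed simp

end
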